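(* Let $h,w\ge 4$ and $G=K_w(U)\sqcap K_h$ where $U\subsetneq V(K_w)$ and $|U|=r$ (so $r\ne w$). Then $Z(G)\le wh-(h+r)$.
   Context: All graphs are finite, simple and undirected. Zero forcing: given a graph $G$ and a set $S\subseteq V(G)$ of initially filled vertices, the color change rule says that if a filled vertex $v$ has exactly one unfilled neighbor $u$, then $v$ forces $u$ to become filled. $S$ is a zero forcing set if repeatedly applying this rule eventually fills every vertex of $G$. The zero forcing number $Z(G)$ is the minimum cardinality of a zero forcing set of $G$. $K_n$ is the complete graph on vertex set $\{1,\dots,n\}$. Generalized hierarchical product: for graphs $W,H$ and $U\subseteq V(W)$ (the root set), $W(U)\sqcap H$ is the graph with vertex set $V(W)\times V(H)$ in which $(x_1,y_1)$ and $(x_2,y_2)$ are adjacent iff either ($x_1=x_2\in U$ and $y_1y_2\in E(H)$) or ($y_1=y_2$ and $x_1x_2\in E(W)$). *)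

theory Defs
  imports Main
begin

text \<open>A finite simple graph is given by a vertex set V and a symmetric, irreflexive
adjacency relation E (only its restriction to V matters).\<close>

definition force_step :: "'a set \<Rightarrow> ('a \<Rightarrow> 'a \<Rightarrow> bool) \<Rightarrow> 'a set \<Rightarrow> 'a set \<Rightarrow> bool" where
  "force_step V E F F' \<longleftrightarrow>
     (\<exists>v u. v \<in> F \<and> u \<in> V \<and> u \<notin> F \<and> E v u \<and>
        (\<forall>u'. u' \<in> V \<and> E v u' \<and> u' \<notin> F \<longrightarrow> u' = u) \<and> F' = insert u F)"

definition zero_forcing_set :: "'a set \<Rightarrow> ('a \<Rightarrow> 'a \<Rightarrow> bool) \<Rightarrow> 'a set \<Rightarrow> bool" where
  "zero_forcing_set V E S \<longleftrightarrow> S \<subseteq> V \<and> (force_step V E)\<^sup>*\<^sup>* S V"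

definition zero_forcing_number :: "'a set \<Rightarrow> ('a \<Rightarrow> 'a \<Rightarrow> bool) \<Rightarrow> nat" where
  "zero_forcing_number V E = Min {card S | S. zero_forcing_set V E S}"

definition K_verts :: "nat \<Rightarrow> nat set" where "K_verts n = {1..n}"
definition K_adj :: "nat \<Rightarrow> nat \<Rightarrow> nat \<Rightarrow> bool" where
  "K_adj n x y \<longleftrightarrow> x \<in> {1..n} \<and> y \<in> {1..n} \<and> x \<noteq> y"

definition hp_verts :: "'a set \<Rightarrow> 'b set \<Rightarrow> ('a \<times> 'b) set" where
  "hp_verts VW VH = VW \<times> VH"
definition hp_adj :: "('a \<Rightarrow> 'a \<Rightarrow> bool) \<Rightarrow> 'a set \<Rightarrow> ('b \<Rightarrow> 'b \<Rightarrow> bool) \<Rightarrow> ('a \<times> 'b) \<Rightarrow> ('a \<times> 'b) \<Rightarrow> bool" where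
  "hp_adj EW U EH p q \<longleftrightarrow>
     (fst p = fst q \<and> fst p \<in> U \<and> EH (snd p) (snd q)) \<or> (snd p = snd q \<and> EW (fst p) (fst q))"

end

theory Submission
  imports Defs
begin

text \<open>Let a be a column outside the root set U, so each vertex (a,y) is adjacent only to its row.
Filling everything except a column c \<noteq> a, every (a,y) forces (c,y); this gives Z \<le> wh - h,
which settles U = {}. If c \<in> U we may also leave the row-1 vertices of U - {c} and (a,1)
unfilled: the (a,y) with y \<ge> 2 fill column c except (c,1), then each (u,2) with u \<in> U
forces (u,1) through its column, and finally (c,1) forces (a,1) through row 1. The unfilled
set then has h + |U| vertices.\<close>

lemma rtranclp_force_step_union:
  assumes "finite T" "T \<subseteq> V" "T \<inter> F = {}"
    and "\<forall>t\<in>T. \<exists>v\<in>F. E v t \<and> (\<forall>u. u \<in> V \<and> E v u \<and> u \<notin> F \<longrightarrow> u = t)"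
  shows "(force_step V E)\<^sup>*\<^sup>* F (F \<union> T)"
  using assms
proof (induction T rule: finite_induct)
  case empty
  then show ?case by simp
next
  case (insert t T)
  then have IH: "(force_step V E)\<^sup>*\<^sup>* F (F \<union> T)" by auto
  from insert.prems obtain v where v: "v \<in> F" "E v t"
    "\<forall>u. u \<in> V \<and> E v u \<and> u \<notin> F \<longrightarrow> u = t" by auto
  have "force_step V E (F \<union> T) (F \<union> insert t T)"
    unfolding force_step_def using v insert by (intro exI[of _ v, OF exI[of _ t]]) auto
  with IH show ?case by (rule rtranclp.rtrancl_into_rtrancl)
qed

lemma zero_forcing_number_le_card:
  assumes "zero_forcing_set V E S" "finite V"
  shows "zero_forcing_number V E \<le> card S"
proof -
  have "{card S |S. zero_forcing_set V E S} \<subseteq> card ` Pow V"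
    unfolding zero_forcing_set_def by auto
  then have "finite {card S |S. zero_forcing_set V E S}"
    using assms(2) by (rule finite_subset[OF _ finite_imageI[OF finite_Pow_iff[THEN iffD2]]])
  then show ?thesis unfolding zero_forcing_number_def
    using assms(1) by (intro Min_le) auto
qed

lemma hp_adj_K_adj_iff:
  "hp_adj (K_adj w) U (K_adj h) (x, y) (x', y') \<longleftrightarrow>
     (x = x' \<and> x \<in> U \<and> y \<in> {1..h} \<and> y' \<in> {1..h} \<and> y \<noteq> y') \<or>
     (y = y' \<and> x \<in> {1..w} \<and> x' \<in> {1..w} \<and> x \<noteq> x')"
  unfolding hp_adj_def K_adj_def by auto

lemma zero_forcing_set_hp_complete_minus_column:
  assumes "a \<in> {1..w}" "a \<notin> U" "c \<in> {1..w}" "c \<noteq> a"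
  shows "zero_forcing_set ({1..w} \<times> {1..h}) (hp_adj (K_adj w) U (K_adj h))
           ({1..w} \<times> {1..h} - {c} \<times> {1..h})"
    (is "zero_forcing_set ?V ?E (?V - ?C)")
proof -
  have "(force_step ?V ?E)\<^sup>*\<^sup>* (?V - ?C) (?V - ?C \<union> ?C)"
  proof (rule rtranclp_force_step_union)
    show "\<forall>t\<in>?C. \<exists>v\<in>?V - ?C. ?E v t \<and> (\<forall>u. u \<in> ?V \<and> ?E v u \<and> u \<notin> ?V - ?C \<longrightarrow> u = t)"
    proof
      fix t assume "t \<in> ?C"
      then obtain y where "t = (c, y)" "y \<in> {1..h}" by auto
      then show "\<exists>v\<in>?V - ?C. ?E v t \<and> (\<forall>u. u \<in> ?V \<and> ?E v u \<and> u \<notin> ?V - ?C \<longrightarrow> u = t)"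
        using assms by (intro bexI[of _ "(a, y)"]) (auto simp: hp_adj_K_adj_iff)
    qed
  qed (use assms in auto)
  moreover have "?V - ?C \<union> ?C = ?V" using assms(3) by auto
  ultimately show ?thesis unfolding zero_forcing_set_def by auto
qed

lemma zero_forcing_set_hp_complete_minus_column_and_roots:
  assumes "a \<in> {1..w}" "a \<notin> U" "c \<in> U" "U \<subseteq> {1..w}" "h \<ge> 2"
  shows "zero_forcing_set ({1..w} \<times> {1..h}) (hp_adj (K_adj w) U (K_adj h))
           ({1..w} \<times> {1..h} - ({c} \<times> {1..h} \<union> insert a (U - {c}) \<times> {1}))"
    (is "zero_forcing_set ?V ?E ?S")
proof -
  have finU: "finite U" using assms(4) finite_subset by blast
  define T1 where "T1 = {c} \<times> {2..h}"
  define T2 where "T2 = U \<times> {1::nat}"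
  have round1: "(force_step ?V ?E)\<^sup>*\<^sup>* ?S (?S \<union> T1)"
  proof (rule rtranclp_force_step_union)
    show "\<forall>t\<in>T1. \<exists>v\<in>?S. ?E v t \<and> (\<forall>u. u \<in> ?V \<and> ?E v u \<and> u \<notin> ?S \<longrightarrow> u = t)"
    proof
      fix t assume "t \<in> T1"
      then obtain y where "t = (c, y)" "y \<in> {2..h}" unfolding T1_def by auto
      then show "\<exists>v\<in>?S. ?E v t \<and> (\<forall>u. u \<in> ?V \<and> ?E v u \<and> u \<notin> ?S \<longrightarrow> u = t)"
        using assms by (intro bexI[of _ "(a, y)"]) (auto simp: hp_adj_K_adj_iff)
    qed
  qed (use assms in \<open>auto simp: T1_def\<close>)
  have round2: "(force_step ?V ?E)\<^sup>*\<^sup>* (?S \<union> T1) (?S \<union> T1 \<union> T2)"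
  proof (rule rtranclp_force_step_union)
    show "\<forall>t\<in>T2. \<exists>v\<in>?S \<union> T1. ?E v t \<and> (\<forall>u. u \<in> ?V \<and> ?E v u \<and> u \<notin> ?S \<union> T1 \<longrightarrow> u = t)"
    proof
      fix t assume "t \<in> T2"
      then obtain x where "t = (x, 1)" "x \<in> U" unfolding T2_def by auto
      then show "\<exists>v\<in>?S \<union> T1. ?E v t \<and> (\<forall>u. u \<in> ?V \<and> ?E v u \<and> u \<notin> ?S \<union> T1 \<longrightarrow> u = t)"
        using assms by (intro bexI[of _ "(x, 2)"]) (auto simp: T1_def hp_adj_K_adj_iff)
    qed
  qed (use assms finU in \<open>auto simp: T1_def T2_def\<close>)
  have round3: "(force_step ?V ?E)\<^sup>*\<^sup>* (?S \<union> T1 \<union> T2) (?S \<union> T1 \<union> T2 \<union> {(a, 1)})"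
  proof (rule rtranclp_force_step_union)
    show "\<forall>t\<in>{(a, 1)}. \<exists>v\<in>?S \<union> T1 \<union> T2.
            ?E v t \<and> (\<forall>u. u \<in> ?V \<and> ?E v u \<and> u \<notin> ?S \<union> T1 \<union> T2 \<longrightarrow> u = t)"
      using assms by (simp, intro bexI[of _ "(c, 1)"]) (auto simp: T1_def T2_def hp_adj_K_adj_iff)
  qed (use assms in \<open>auto simp: T1_def T2_def\<close>)
  have "?S \<union> T1 \<union> T2 \<union> {(a, 1)} = ?V"
    using assms unfolding T1_def T2_def by auto
  moreover have "(force_step ?V ?E)\<^sup>*\<^sup>* ?S (?S \<union> T1 \<union> T2 \<union> {(a, 1)})"
    using rtranclp_trans[OF rtranclp_trans[OF round1 round2] round3] .
  ultimately show ?thesis unfolding zero_forcing_set_def by auto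
qed

lemma card_column_union_roots:
  assumes "finite U" "c \<in> U" "a \<notin> U"
  shows "card ({c} \<times> {1..h} \<union> insert a (U - {c}) \<times> {1::nat}) = h + card U"
proof -
  have "card U > 0" using assms(1,2) card_gt_0_iff by blast
  then have "card (insert a (U - {c})) = card U"
    using assms by (simp add: card_Diff_singleton)
  moreover have "{c} \<times> {1..h} \<inter> insert a (U - {c}) \<times> {1} = {}"
    using assms by auto
  then have "card ({c} \<times> {1..h} \<union> insert a (U - {c}) \<times> {1::nat})
               = card ({c} \<times> {1..h}) + card (insert a (U - {c}) \<times> {1::nat})"
    using assms(1) by (intro card_Un_disjoint) auto
  ultimately show ?thesis by (simp only: card_cartesian_product) simp
qed

lemma card_grid_Diff:
  assumes "B \<subseteq> {1..w} \<times> {1..h}"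
  shows "card ({1..w} \<times> {1..h} - B) = w * h - card (B :: (nat \<times> nat) set)"
  using assms by (simp add: card_Diff_subset finite_subset)

theorem mainTheorem10:
  fixes w h r :: nat and U :: "nat set"
  assumes "w \<ge> 4" and "h \<ge> 4" and "U \<subset> K_verts w" and "card U = r"
  shows "zero_forcing_number (hp_verts (K_verts w) (K_verts h)) (hp_adj (K_adj w) U (K_adj h))
           \<le> w * h - (h + r)"
proof -
  let ?V = "{1..w} \<times> {1..h}" and ?E = "hp_adj (K_adj w) U (K_adj h)"
  have U: "U \<subseteq> {1..w}" using assms(3) unfolding K_verts_def by auto
  obtain a where a: "a \<in> {1..w}" "a \<notin> U" using assms(3) unfolding K_verts_def by blast
  have "zero_forcing_number ?V ?E \<le> w * h - (h + card U)"
  proof (cases "U = {}")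
    case True
    define c where "c = (if a = 1 then 2 else 1 :: nat)"
    have c: "c \<in> {1..w}" "c \<noteq> a" using assms(1) by (auto simp: c_def)
    have "zero_forcing_number ?V ?E \<le> card (?V - {c} \<times> {1..h})"
      by (rule zero_forcing_number_le_card[OF zero_forcing_set_hp_complete_minus_column[OF a c]]) simp
    also have "\<dots> = w * h - h" using c by (subst card_grid_Diff) auto
    finally show ?thesis using True by simp
  next
    case False
    then obtain c where c: "c \<in> U" by auto
    let ?B = "{c} \<times> {1..h} \<union> insert a (U - {c}) \<times> {1}"
    have "zero_forcing_number ?V ?E \<le> card (?V - ?B)"
      using assms(2) by (intro zero_forcing_number_le_card
          zero_forcing_set_hp_complete_minus_column_and_roots[OF a c U]) auto
    also have "\<dots> = w * h - card ?B" using a c U assms(2) by (intro card_grid_Diff) auto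
    also have "card ?B = h + card U"
      using a c finite_subset[OF U] by (intro card_column_union_roots) auto
    finally show ?thesis .
  qed
  then show ?thesis using assms(4) by (simp add: hp_verts_def K_verts_def)
qed

end
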